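(* In the setting described in the context, suppose there is exactly one buffer pool ($L=1$). Then $M=e'$ and $G=(\lambda^* )'$, and moreover $M\eta q=\eta$ and $MC\,\mathrm{diag}(x^* )A'=e'$.
   Context: Let $I\ge1$, $J\ge I$; each activity $j\in\{1,\dots,J\}$ has a server $s(j)$ and a buffer $b(j)$ in $\{1,\dots,I\}$, with $s(j)=b(j)=j$ for $j\le I$. Let $A_{ij}=\mathbf1\{s(j)=i\}$, $C_{ij}=\mathbf1\{b(j)=i\}$, $\lambda^*\in(0,\infty)^I$, $\mu_j^*=\lambda^*_{s(j)}$, $R_{ij}=\mu_j^*C_{ij}$, $\eta>0$, $q\in(0,1)^I$ with $\sum q_i=1$, $\nu=\eta q$; assume there is a unique $x^*\in\mathbb{R}^J$ with $x^*_j=\min\{\lambda^*_j,\nu_j\}$ for $j\le I$, $Rx^*=\nu$, $Ax^*=e$, $x^*\ge0$. Activity $j$ is basic if $x_j^*>0$. Buffers $i,i'$ communicate directly if there are basic $j,j'$ with $b(j)=i$, $b(j')=i'$, $s(j)=s(j')$; they communicate if linked by a finite chain of directly communicating buffers; the equivalence classes are the buffer pools $\mathcal P_1,\dots,\mathcal P_L$. The server pools are $\mathcal S_l=\{k:\exists\text{ basic } j\text{ with } s(j)=k,\ b(j)\in\mathcal P_l\}$. $M$ is the $L\times I$ matrix $M_{li}=\mathbf 1\{i\in\mathcal P_l\}$, $G$ the $L\times I$ matrix $G_{lk}=\lambda^*_k\mathbf1\{k\in\mathcal S_l\}$, $e$ a vector of ones of appropriate dimension, and $\mathrm{diag}(x^*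 )$ the $J\times J$ diagonal matrix with diagonal $x^*$. *)

theory Defs
  imports Complex_Main
begin

text \<open>Indices: buffers and servers range over {1..I}, activities over {1..J}.
  Vectors are functions nat => real, matrices functions nat => nat => real.\<close>

definition Amat :: "(nat \<Rightarrow> nat) \<Rightarrow> nat \<Rightarrow> nat \<Rightarrow> real" where
  "Amat s i j = (if s j = i then 1 else 0)"

definition Cmat :: "(nat \<Rightarrow> nat) \<Rightarrow> nat \<Rightarrow> nat \<Rightarrow> real" where
  "Cmat b i j = (if b j = i then 1 else 0)"

definition Rmat :: "(nat \<Rightarrow> nat) \<Rightarrow> (nat \<Rightarrow> nat) \<Rightarrow> (nat \<Rightarrow> real) \<Rightarrow> nat \<Rightarrow> nat \<Rightarrow> real" where
  "Rmat s b lam i j = lam (s j) * Cmat b i j"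

definition feasible ::
  "nat \<Rightarrow> nat \<Rightarrow> (nat \<Rightarrow> nat) \<Rightarrow> (nat \<Rightarrow> nat) \<Rightarrow> (nat \<Rightarrow> real) \<Rightarrow> (nat \<Rightarrow> real) \<Rightarrow> (nat \<Rightarrow> real) \<Rightarrow> bool" where
  "feasible I J s b lam nu x \<longleftrightarrow>
     (\<forall>j\<in>{1..I}. x j = min (lam j) (nu j)) \<and>
     (\<forall>i\<in>{1..I}. (\<Sum>j=1..J. Rmat s b lam i j * x j) = nu i) \<and>
     (\<forall>i\<in>{1..I}. (\<Sum>j=1..J. Amat s i j * x j) = 1) \<and>
     (\<forall>j\<in>{1..J}. x j \<ge> 0)"

definition basic :: "(nat \<Rightarrow> real) \<Rightarrow> nat \<Rightarrow> bool" where
  "basic x j \<longleftrightarrow> x j > 0"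

definition dcomm :: "nat \<Rightarrow> (nat \<Rightarrow> nat) \<Rightarrow> (nat \<Rightarrow> nat) \<Rightarrow> (nat \<Rightarrow> real) \<Rightarrow> (nat \<times> nat) set" where
  "dcomm J s b x = {(i, i'). \<exists>j\<in>{1..J}. \<exists>j'\<in>{1..J}.
      basic x j \<and> basic x j' \<and> b j = i \<and> b j' = i' \<and> s j = s j'}"

definition comm :: "nat \<Rightarrow> nat \<Rightarrow> (nat \<Rightarrow> nat) \<Rightarrow> (nat \<Rightarrow> nat) \<Rightarrow> (nat \<Rightarrow> real) \<Rightarrow> (nat \<times> nat) set" where
  "comm I J s b x = (dcomm J s b x)\<^sup>* \<inter> ({1..I} \<times> {1..I})"

definition buffer_pools :: "nat \<Rightarrow> nat \<Rightarrow> (nat \<Rightarrow> nat) \<Rightarrow> (nat \<Rightarrow> nat) \<Rightarrow> (nat \<Rightarrow> real) \<Rightarrow> nat set set" where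
  "buffer_pools I J s b x = {1..I} // comm I J s b x"

definition server_pool :: "nat \<Rightarrow> (nat \<Rightarrow> nat) \<Rightarrow> (nat \<Rightarrow> nat) \<Rightarrow> (nat \<Rightarrow> real) \<Rightarrow> nat set \<Rightarrow> nat set" where
  "server_pool J s b x P = {k. \<exists>j\<in>{1..J}. basic x j \<and> s j = k \<and> b j \<in> P}"

text \<open>Rows of M and G, indexed by the buffer pool P itself.\<close>
definition Mmat :: "nat set \<Rightarrow> nat \<Rightarrow> real" where
  "Mmat P i = (if i \<in> P then 1 else 0)"

definition Gmat :: "nat \<Rightarrow> (nat \<Rightarrow> nat) \<Rightarrow> (nat \<Rightarrow> nat) \<Rightarrow> (nat \<Rightarrow> real) \<Rightarrow> (nat \<Rightarrow> real) \<Rightarrow> nat set \<Rightarrow> nat \<Rightarrow> real" where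
  "Gmat J s b x lam P k = (if k \<in> server_pool J s b x P then lam k else 0)"

end

theory Submission
  imports Defs
begin

(* With a single pool every buffer lies in it, so M is the all-ones row; then M C diag(x) A'
   collapses to A x = e, and every server lies in the server pool because row k of A x = e,
   a sum of nonnegative terms equal to 1, has a positive term. *)

lemma quotient_card_1_covers:
  assumes "card (A // r) = 1" and "P \<in> A // r" and "\<And>a. a \<in> A \<Longrightarrow> (a, a) \<in> r"
  shows "A \<subseteq> P"
proof
  fix a assume a: "a \<in> A"
  obtain Q where "A // r = {Q}" using assms(1) card_1_singletonE by blast
  moreover have "r `` {a} \<in> A // r" using a by (rule quotientI)
  ultimately have "P = r `` {a}" using assms(2) by auto
  then show "a \<in> P" using assms(3) a by auto
qed

lemma comm_refl: "i \<in> {1..I} \<Longrightarrow> (i, i) \<in> comm I J s b x"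
  unfolding comm_def by auto

lemma single_buffer_pool_contains_all_buffers:
  assumes "card (buffer_pools I J s b x) = 1" and "P \<in> buffer_pools I J s b x"
  shows "{1..I} \<subseteq> P"
  using assms comm_refl unfolding buffer_pools_def by (rule quotient_card_1_covers)

lemma feasible_server_has_basic_activity:
  assumes "feasible I J s b lam nu x" and "k \<in> {1..I}"
  shows "\<exists>j\<in>{1..J}. basic x j \<and> s j = k"
proof (rule ccontr)
  assume "\<not> ?thesis"
  moreover have "\<forall>j\<in>{1..J}. x j \<ge> 0" using assms(1) unfolding feasible_def by blast
  ultimately have "\<forall>j\<in>{1..J}. Amat s k j * x j = 0" by (force simp: Amat_def basic_def)
  then have "(\<Sum>j=1..J. Amat s k j * x j) = 0" by (rule sum.neutral)
  moreover have "(\<Sum>j=1..J. Amat s k j * x j) = 1" using assms unfolding feasible_def by blast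
  ultimately show False by simp
qed

lemma sum_Cmat_column:
  assumes "finite B" and "b j \<in> B"
  shows "(\<Sum>i\<in>B. Cmat b i j * c) = c"
proof -
  have "(\<Sum>i\<in>B. Cmat b i j * c) = (\<Sum>i\<in>{b j}. Cmat b i j * c)"
    using assms by (intro sum.mono_neutral_right) (auto simp: Cmat_def)
  then show ?thesis by (simp add: Cmat_def)
qed

lemma row_C_diag_A_sum:
  assumes "\<forall>j\<in>{1..J}. b j \<in> {1..I}"
  shows "(\<Sum>i=1..I. \<Sum>j=1..J. m i * Cmat b i j * x j * Amat s k j)
       = (\<Sum>j=1..J. m (b j) * x j * Amat s k j)"
proof -
  have "(\<Sum>i=1..I. \<Sum>j=1..J. m i * Cmat b i j * x j * Amat s k j)
      = (\<Sum>j=1..J. \<Sum>i=1..I. Cmat b i j * (m (b j) * x j * Amat s k j))"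
    by (subst sum.swap) (intro sum.cong refl, auto simp: Cmat_def)
  also have "\<dots> = (\<Sum>j=1..J. m (b j) * x j * Amat s k j)"
    using assms by (intro sum.cong refl sum_Cmat_column) auto
  finally show ?thesis .
qed

theorem lemma4:
  fixes I J :: nat and s b :: "nat \<Rightarrow> nat" and lam q x :: "nat \<Rightarrow> real" and eta :: real
  assumes "I \<ge> 1" and "J \<ge> I"
    and "\<forall>j\<in>{1..J}. s j \<in> {1..I} \<and> b j \<in> {1..I}"
    and "\<forall>j\<in>{1..I}. s j = j \<and> b j = j"
    and "\<forall>i\<in>{1..I}. lam i > 0"
    and "eta > 0"
    and "\<forall>i\<in>{1..I}. 0 < q i \<and> q i < 1" and "(\<Sum>i=1..I. q i) = 1"
    and "feasible I J s b lam (\<lambda>i. eta * q i) x"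
    and "\<forall>y. feasible I J s b lam (\<lambda>i. eta * q i) y \<longrightarrow> (\<forall>j\<in>{1..J}. y j = x j)"
    and "card (buffer_pools I J s b x) = 1"
  shows "\<forall>P\<in>buffer_pools I J s b x.
           (\<forall>i\<in>{1..I}. Mmat P i = 1)
         \<and> (\<forall>k\<in>{1..I}. Gmat J s b x lam P k = lam k)
         \<and> (\<Sum>i=1..I. Mmat P i * (eta * q i)) = eta
         \<and> (\<forall>k\<in>{1..I}. (\<Sum>i=1..I. \<Sum>j=1..J. Mmat P i * Cmat b i j * x j * Amat s k j) = 1)"
proof
  fix P assume "P \<in> buffer_pools I J s b x"
  with assms(11) have all_in_P: "{1..I} \<subseteq> P" by (rule single_buffer_pool_contains_all_buffers)
  then have M: "\<forall>i\<in>{1..I}. Mmat P i = 1" by (auto simp: Mmat_def)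
  have G: "\<forall>k\<in>{1..I}. Gmat J s b x lam P k = lam k"
    using feasible_server_has_basic_activity[OF assms(9)] assms(3) all_in_P
    by (fastforce simp: Gmat_def server_pool_def)
  have "(\<Sum>i=1..I. Mmat P i * (eta * q i)) = eta * (\<Sum>i=1..I. q i)"
    using M by (simp add: sum_distrib_left)
  with assms(8) have Mnu: "(\<Sum>i=1..I. Mmat P i * (eta * q i)) = eta" by simp
  have "(\<Sum>i=1..I. \<Sum>j=1..J. Mmat P i * Cmat b i j * x j * Amat s k j) = 1"
    if k: "k \<in> {1..I}" for k
  proof -
    have "(\<Sum>i=1..I. \<Sum>j=1..J. Mmat P i * Cmat b i j * x j * Amat s k j)
        = (\<Sum>j=1..J. Mmat P (b j) * x j * Amat s k j)"
      using assms(3) by (intro row_C_diag_A_sum) blast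
    also have "\<dots> = (\<Sum>j=1..J. Amat s k j * x j)"
      using assms(3) M by (intro sum.cong refl) auto
    also have "\<dots> = 1" using assms(9) k unfolding feasible_def by blast
    finally show ?thesis .
  qed
  with M G Mnu show "(\<forall>i\<in>{1..I}. Mmat P i = 1)
         \<and> (\<forall>k\<in>{1..I}. Gmat J s b x lam P k = lam k)
         \<and> (\<Sum>i=1..I. Mmat P i * (eta * q i)) = eta
         \<and> (\<forall>k\<in>{1..I}. (\<Sum>i=1..I. \<Sum>j=1..J. Mmat P i * Cmat b i j * x j * Amat s k j) = 1)"
    by blast
qed

end
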